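(* Let $X$ be an infinite compact metrizable space and $h\colon X\to X$ a minimal homeomorphism, and let $\varepsilon>0$. (1) For any non-empty open $U\subset X$ there is a non-empty open $E\subset U$ with $\mu(E)<\varepsilon$ for all $\mu\in M_h(X)$. (2) For any non-empty open $U\subset X$ with $\partial U$ universally null, there is a closed set $K\subset U$ with $\mathrm{int}(K)\neq\varnothing$ such that $\mu(U\setminus K)<\varepsilon$ for all $\mu\in M_h(X)$. (3) For any non-empty open $U\subset X$ with $\partial U$ universally null, there is an open set $E\subset U$ with $\overline{E}\subset U$ such that $\mu(U\setminus\overline{E})<\varepsilon$ for all $\mu\in M_h(X)$. (4) For any closed $K\subset X$ with $\partial K$ universally null, there is an open set $E\subset X$ with $K\subset E$ and $\mu(E\setminus K)<\varepsilon$ for all $\mu\in M_h(X)$.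
   Context: $M_h(X)$ denotes the set of $h$-invariant Borel probability measures on $X$. A Borel set is universally null if it has measure $0$ for all $\mu\in M_h(X)$. $\partial A$ denotes the boundary of $A$. *)

theory Defs
  imports "HOL-Probability.Probability"
begin

definition minimal_map :: "('a::topological_space \<Rightarrow> 'a) \<Rightarrow> bool" where
  "minimal_map h \<longleftrightarrow> (\<forall>A. closed A \<and> h ` A = A \<longrightarrow> A = {} \<or> A = UNIV)"

definition inv_prob_measures :: "('a::topological_space \<Rightarrow> 'a) \<Rightarrow> 'a measure set" where
  "inv_prob_measures h = {\<mu>. sets \<mu> = sets borel \<and> prob_space \<mu> \<and>
       (\<forall>A\<in>sets borel. emeasure \<mu> (h -` A) = emeasure \<mu> A)}"

definition universally_null :: "('a::topological_space \<Rightarrow> 'a) \<Rightarrow> 'a set \<Rightarrow> bool" where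
  "universally_null h B \<longleftrightarrow> B \<in> sets borel \<and> (\<forall>\<mu>\<in>inv_prob_measures h. emeasure \<mu> B = 0)"

end

theory Submission
  imports Defs
begin

text \<open>
  Part (1): a minimal homeomorphism of an infinite space has no periodic points, so every point
  has a neighbourhood V disjoint from its first N - 1 preimages; invariance then gives
  N \<mu>(V) \<le> 1 for every \<mu> in M_h(X).

  Parts (2)--(4): M_h(X) is weak-* compact, hence if closed sets C_n decrease to a universally
  null set then sup_\<mu> \<mu>(C_n) \<rightarrow> 0. Applied to thin closed collars around the boundary this gives
  the approximations. Compactness is obtained by taking a cluster point L of the integration
  functionals in the product space of all real functionals on functions X \<rightarrow> \<real>; L is positive,
  normalized and h-invariant on C(X), and the Riesz outer-measure construction turns it into an
  invariant measure that charges the intersection of the C_n.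
\<close>

text \<open>Rudin's \<phi> \<prec> G, with supp \<phi> \<subseteq> G weakened to \<phi> = 0 off G; compact support is recovered by
  truncating \<phi> at a small height.\<close>
definition subordinate :: "'a::topological_space set \<Rightarrow> ('a \<Rightarrow> real) set" where
  "subordinate G = {\<phi>. continuous_on UNIV \<phi> \<and> (\<forall>x. 0 \<le> \<phi> x \<and> \<phi> x \<le> 1) \<and> (\<forall>x. x \<notin> G \<longrightarrow> \<phi> x = 0)}"

definition open_content :: "(('a::topological_space \<Rightarrow> real) \<Rightarrow> real) \<Rightarrow> 'a set \<Rightarrow> real" where
  "open_content L G = Sup (L ` subordinate G)"

definition outer_content :: "(('a::topological_space \<Rightarrow> real) \<Rightarrow> real) \<Rightarrow> 'a set \<Rightarrow> real" where
  "outer_content L A = Inf (open_content L ` {W. open W \<and> A \<subseteq> W})"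

lemma compact_Un_cover_functions:
  fixes F W1 W2 :: "'a::metric_space set"
  assumes "compact F" "F \<subseteq> W1 \<union> W2" "open W1" "open W2" "W1 \<noteq> UNIV" "W2 \<noteq> UNIV"
  obtains a b :: "'a \<Rightarrow> real"
  where "continuous_on UNIV a" "continuous_on UNIV b" "\<And>x. 0 \<le> a x" "\<And>x. 0 \<le> b x"
    "\<And>x. x \<notin> W1 \<Longrightarrow> a x = 0" "\<And>x. x \<notin> W2 \<Longrightarrow> b x = 0" "\<And>x. x \<in> F \<Longrightarrow> 1 \<le> a x + b x"
proof (cases "F = {}")
  case True
  then show thesis by (intro that[of "\<lambda>x. 0" "\<lambda>x. 0"]) auto
next
  case False
  define d1 where "d1 x = infdist x (- W1)" for x
  define d2 where "d2 x = infdist x (- W2)" for x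
  have cont: "continuous_on UNIV d1" "continuous_on UNIV d2"
    unfolding d1_def d2_def by (auto intro!: continuous_intros)
  have nonneg: "0 \<le> d1 x" "0 \<le> d2 x" for x by (auto simp: d1_def d2_def infdist_nonneg)
  \<comment> \<open>d1 + d2 is positive on F, so by compactness it is bounded below there by some c > 0.\<close>
  obtain x0 where x0: "x0 \<in> F" "\<And>y. y \<in> F \<Longrightarrow> d1 x0 + d2 x0 \<le> d1 y + d2 y"
    using continuous_attains_inf[OF assms(1) False, of "\<lambda>x. d1 x + d2 x"] cont
    by (auto intro: continuous_on_subset continuous_intros)
  define c where "c = d1 x0 + d2 x0"
  have "x0 \<in> W1 \<Longrightarrow> 0 < d1 x0" "x0 \<in> W2 \<Longrightarrow> 0 < d2 x0"
    using infdist_pos_not_in_closed[of "- W1" x0] infdist_pos_not_in_closed[of "- W2" x0] assms(3-6)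
    by (auto simp: d1_def d2_def)
  moreover have "x0 \<in> W1 \<or> x0 \<in> W2" using x0(1) assms(2) by auto
  ultimately have "c > 0" using nonneg[of x0] unfolding c_def by linarith
  show thesis
  proof (rule that[of "\<lambda>x. d1 x / c" "\<lambda>x. d2 x / c"])
    show "x \<in> F \<Longrightarrow> 1 \<le> d1 x / c + d2 x / c" for x
      using x0(2) \<open>c > 0\<close> by (simp add: c_def add_divide_distrib[symmetric])
  qed (use cont nonneg \<open>c > 0\<close> in \<open>auto simp: d1_def d2_def infdist_zero intro!: continuous_intros\<close>)
qed

lemma subordinate_Un_split:
  fixes F W1 W2 :: "'a::metric_space set"
  assumes "compact F" "F \<subseteq> W1 \<union> W2" "open W1" "open W2"
    and \<psi>: "\<psi> \<in> subordinate (W1 \<union> W2)" "\<And>x. x \<notin> F \<Longrightarrow> \<psi> x = 0"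
  obtains \<psi>1 \<psi>2 where "\<psi>1 \<in> subordinate W1" "\<psi>2 \<in> subordinate W2" "\<And>x. \<psi> x \<le> \<psi>1 x + \<psi>2 x"
proof -
  have \<psi>c: "continuous_on UNIV \<psi>" and \<psi>01: "\<And>x. 0 \<le> \<psi> x \<and> \<psi> x \<le> 1"
    using \<psi>(1) by (auto simp: subordinate_def)
  consider "W1 = UNIV" | "W2 = UNIV" | "W1 \<noteq> UNIV" "W2 \<noteq> UNIV" by blast
  then show thesis
  proof cases
    case 1
    then show thesis using that[of \<psi> "\<lambda>x. 0"] \<psi> by (auto simp: subordinate_def)
  next
    case 2
    then show thesis using that[of "\<lambda>x. 0" \<psi>] \<psi> by (auto simp: subordinate_def)
  next
    case 3
    then obtain a b :: "'a \<Rightarrow> real" where ab: "continuous_on UNIV a" "continuous_on UNIV b"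
      "\<And>x. 0 \<le> a x" "\<And>x. 0 \<le> b x" "\<And>x. x \<notin> W1 \<Longrightarrow> a x = 0" "\<And>x. x \<notin> W2 \<Longrightarrow> b x = 0"
      "\<And>x. x \<in> F \<Longrightarrow> 1 \<le> a x + b x"
      using compact_Un_cover_functions[OF assms(1-4)] by blast
    show thesis
    proof (rule that[of "\<lambda>x. min (\<psi> x) (a x)" "\<lambda>x. min (\<psi> x) (b x)"])
      show "\<psi> x \<le> min (\<psi> x) (a x) + min (\<psi> x) (b x)" for x
        using ab(3,4,7)[of x] \<psi>(2)[of x] \<psi>01[of x] by (cases "x \<in> F") (auto simp: min_def)
    qed (use \<psi>c \<psi>01 ab in \<open>auto simp: subordinate_def min_le_iff_disj intro!: continuous_intros\<close>)
  qed
qed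

lemma closed_decseq_subset_open:
  fixes C :: "nat \<Rightarrow> 'a::topological_space set"
  assumes "compact (C 0)" "\<And>n. closed (C n)" "decseq C" "open W" "(\<Inter>n. C n) \<subseteq> W"
  obtains m where "C m \<subseteq> W"
proof (rule ccontr)
  assume "\<not> thesis"
  then have out: "C m - W \<noteq> {}" for m using that by blast
  have "C 0 \<inter> \<Inter>((\<lambda>n. C n - W) ` UNIV) \<noteq> {}"
  proof (rule compact_imp_fip_image[OF assms(1)])
    show "closed (C n - W)" for n using assms(2,4) by auto
    fix I :: "nat set" assume "finite I"
    then obtain m where "I \<subseteq> {..<m}" using finite_nat_bounded by blast
    moreover have "C m \<subseteq> C n" if "n \<le> m" for n using decseqD[OF assms(3) that] .
    ultimately have "C m - W \<subseteq> C 0 \<inter> \<Inter>((\<lambda>n. C n - W) ` I)"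
      by (auto simp: subset_iff less_imp_le)
    then show "C 0 \<inter> \<Inter>((\<lambda>n. C n - W) ` I) \<noteq> {}" using out[of m] by blast
  qed
  then show False using assms(5) by blast
qed

lemma urysohn_subordinate:
  fixes W K :: "'a::metric_space set"
  assumes "open W" "closed K" "K \<subseteq> W"
  obtains \<phi> where "\<phi> \<in> subordinate W" "\<And>x. indicator K x \<le> \<phi> x"
proof (cases "W = UNIV \<or> K = {}")
  case True
  then show ?thesis
    using that[of "\<lambda>x. 1"] that[of "\<lambda>x. 0"] by (auto simp: subordinate_def indicator_def)
next
  case False
  define a where "a x = infdist x (- W)" for x
  define b where "b x = infdist x K" for x
  have ab_nonneg: "0 \<le> a x" "0 \<le> b x" for x by (auto simp: a_def b_def infdist_nonneg)
  have a_pos: "x \<in> W \<Longrightarrow> 0 < a x" and b_pos: "x \<notin> K \<Longrightarrow> 0 < b x" for x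
    using False assms infdist_pos_not_in_closed[of "- W" x] infdist_pos_not_in_closed[of K x]
    by (auto simp: a_def b_def)
  have pos: "0 < a x + b x" for x
  proof (cases "x \<in> W")
    case True
    then show ?thesis using a_pos[of x] ab_nonneg[of x] by linarith
  next
    case False
    then show ?thesis using b_pos[of x] ab_nonneg[of x] assms(3) by fastforce
  qed
  define \<phi> where "\<phi> x = a x / (a x + b x)" for x
  have "continuous_on UNIV \<phi>"
    unfolding \<phi>_def a_def b_def using pos unfolding a_def b_def
    by (intro continuous_on_divide continuous_intros) (auto simp: less_le)
  then have "\<phi> \<in> subordinate W"
    using ab_nonneg pos by (auto simp: subordinate_def \<phi>_def a_def infdist_zero divide_le_eq_1)
  moreover have "indicator K x \<le> \<phi> x" for x
    using a_pos[of x] ab_nonneg[of x] pos[of x] assms(3)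
    by (cases "x \<in> K") (auto simp: \<phi>_def b_def infdist_zero)
  ultimately show ?thesis by (rule that)
qed

locale positive_functional =
  fixes L :: "('a::metric_space \<Rightarrow> real) \<Rightarrow> real"
  assumes compact_UNIV: "compact (UNIV :: 'a set)"
    and additive: "\<And>f g. continuous_on UNIV f \<Longrightarrow> continuous_on UNIV g \<Longrightarrow> L (\<lambda>x. f x + g x) = L f + L g"
    and monotone: "\<And>f g. continuous_on UNIV f \<Longrightarrow> continuous_on UNIV g \<Longrightarrow> (\<And>x. f x \<le> g x) \<Longrightarrow> L f \<le> L g"
    and normalized: "\<And>c. L (\<lambda>x. c) = c"
begin

lemma subordinate_bounds: "\<phi> \<in> subordinate G \<Longrightarrow> 0 \<le> L \<phi> \<and> L \<phi> \<le> 1"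
  using monotone[of "\<lambda>x. 0" \<phi>] monotone[of \<phi> "\<lambda>x. 1"] normalized[of 0] normalized[of 1] by (auto simp: subordinate_def)

lemma le_open_content: "\<phi> \<in> subordinate G \<Longrightarrow> L \<phi> \<le> open_content L G"
  unfolding open_content_def
  by (rule cSup_upper) (auto simp: bdd_above_def dest: subordinate_bounds)

lemma open_content_least:
  assumes "\<And>\<phi>. \<phi> \<in> subordinate G \<Longrightarrow> L \<phi> \<le> c"
  shows "open_content L G \<le> c"
proof -
  have "(\<lambda>x. 0) \<in> subordinate G" by (simp add: subordinate_def)
  then show ?thesis unfolding open_content_def using assms by (intro cSup_least) auto
qed

lemma open_content_bounds: "0 \<le> open_content L G \<and> open_content L G \<le> 1"
  using le_open_content[of "\<lambda>x. 0" G] normalized[of 0] open_content_least[of G 1] subordinate_bounds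
  by (auto simp: subordinate_def)

lemma open_content_approx:
  assumes "t > 0"
  obtains \<phi> where "\<phi> \<in> subordinate G" "open_content L G - t < L \<phi>"
  using open_content_least[of G "open_content L G - t"] assms that by force

lemma open_content_mono: "G \<subseteq> G' \<Longrightarrow> open_content L G \<le> open_content L G'"
  by (intro open_content_least le_open_content) (auto simp: subordinate_def)

lemma open_content_empty: "open_content L {} = 0"
proof -
  have "\<phi> \<in> subordinate {} \<Longrightarrow> \<phi> = (\<lambda>x. 0)" for \<phi> :: "'a \<Rightarrow> real"
    by (auto simp: subordinate_def)
  then have "open_content L {} \<le> 0" using normalized[of 0] by (intro open_content_least) auto
  then show ?thesis using open_content_bounds[of "{}"] by simp
qed

lemma open_content_UNIV: "open_content L UNIV = 1"
  using le_open_content[of "\<lambda>x. 1" UNIV] open_content_bounds[of UNIV] normalized[of 1]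
  by (simp add: subordinate_def)

lemma closed_imp_compact: "closed F \<Longrightarrow> compact (F :: 'a set)"
  using compact_UNIV compact_Int_closed[of UNIV F] by simp

lemma truncate_subordinate:
  assumes "\<phi> \<in> subordinate G" "t > 0"
  shows "(\<lambda>x. max (\<phi> x - t) 0) \<in> subordinate G" "L \<phi> - t \<le> L (\<lambda>x. max (\<phi> x - t) 0)"
    "closed {x. t \<le> \<phi> x}" "{x. t \<le> \<phi> x} \<subseteq> G"
proof -
  have c: "continuous_on UNIV \<phi>" using assms by (auto simp: subordinate_def)
  then have c': "continuous_on UNIV (\<lambda>x. max (\<phi> x - t) 0)" by (intro continuous_intros)
  show "(\<lambda>x. max (\<phi> x - t) 0) \<in> subordinate G"
    using assms c' by (auto simp: subordinate_def) (smt (verit))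
  have "L \<phi> \<le> L (\<lambda>x. max (\<phi> x - t) 0 + t)"
    using c c' by (intro monotone) (auto intro!: continuous_intros)
  also have "\<dots> = L (\<lambda>x. max (\<phi> x - t) 0) + t"
    using additive[OF c' continuous_on_const] normalized by simp
  finally show "L \<phi> - t \<le> L (\<lambda>x. max (\<phi> x - t) 0)" by simp
  show "closed {x. t \<le> \<phi> x}" using c by (intro closed_Collect_le continuous_intros)
  show "{x. t \<le> \<phi> x} \<subseteq> G" using assms by (auto simp: subordinate_def)
qed

lemma open_content_le_compact_support:
  assumes "\<And>\<psi> F. \<psi> \<in> subordinate G \<Longrightarrow> closed F \<Longrightarrow> F \<subseteq> G \<Longrightarrow> (\<And>x. x \<notin> F \<Longrightarrow> \<psi> x = 0) \<Longrightarrow> L \<psi> \<le> c"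
  shows "open_content L G \<le> c"
proof (rule open_content_least)
  fix \<phi> assume \<phi>: "\<phi> \<in> subordinate G"
  show "L \<phi> \<le> c"
  proof (rule field_le_epsilon)
    fix t :: real assume "0 < t"
    from truncate_subordinate[OF \<phi> this] have "L (\<lambda>x. max (\<phi> x - t) 0) \<le> c" "L \<phi> - t \<le> L (\<lambda>x. max (\<phi> x - t) 0)"
      by (auto intro!: assms)
    then show "L \<phi> \<le> c + t" by linarith
  qed
qed

lemma open_content_subadditive:
  assumes "open W1" "open W2"
  shows "open_content L (W1 \<union> W2) \<le> open_content L W1 + open_content L W2"
proof (rule open_content_le_compact_support)
  fix \<psi> F assume \<psi>: "\<psi> \<in> subordinate (W1 \<union> W2)" "closed F" "F \<subseteq> W1 \<union> W2" "\<And>x. x \<notin> F \<Longrightarrow> \<psi> x = 0"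
  obtain \<psi>1 \<psi>2 where \<psi>12: "\<psi>1 \<in> subordinate W1" "\<psi>2 \<in> subordinate W2" "\<And>x. \<psi> x \<le> \<psi>1 x + \<psi>2 x"
    using subordinate_Un_split[OF closed_imp_compact[OF \<psi>(2)] \<psi>(3) assms \<psi>(1,4)] by blast
  have cont: "continuous_on UNIV \<psi>" "continuous_on UNIV \<psi>1" "continuous_on UNIV \<psi>2"
    using \<psi>(1) \<psi>12 by (auto simp: subordinate_def)
  have "L \<psi> \<le> L (\<lambda>x. \<psi>1 x + \<psi>2 x)"
    using cont \<psi>12(3) by (intro monotone) (auto intro!: continuous_intros)
  also have "\<dots> = L \<psi>1 + L \<psi>2" using additive cont by auto
  also have "\<dots> \<le> open_content L W1 + open_content L W2"
    using le_open_content[OF \<psi>12(1)] le_open_content[OF \<psi>12(2)] by linarith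
  finally show "L \<psi> \<le> open_content L W1 + open_content L W2" .
qed

lemma open_content_UN_le:
  fixes W :: "nat \<Rightarrow> 'a set"
  assumes "\<And>i. open (W i)" "\<And>n. (\<Sum>i<n. open_content L (W i)) \<le> S"
  shows "open_content L (\<Union>i. W i) \<le> S"
proof (rule open_content_le_compact_support)
  fix \<psi> F assume \<psi>: "\<psi> \<in> subordinate (\<Union>i. W i)" "closed F" "F \<subseteq> (\<Union>i. W i)" "\<And>x. x \<notin> F \<Longrightarrow> \<psi> x = 0"
  obtain I where I: "finite I" "F \<subseteq> (\<Union>i\<in>I. W i)"
  proof (rule compactE_image[OF closed_imp_compact[OF \<psi>(2)], of UNIV W])
    show "\<And>i. i \<in> UNIV \<Longrightarrow> open (W i)" "F \<subseteq> (\<Union>i\<in>UNIV. W i)" using assms(1) \<psi>(3) by auto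
  qed (use that in blast)
  obtain n where "I \<subseteq> {..<n}" using finite_nat_bounded[OF I(1)] by blast
  then have F: "F \<subseteq> (\<Union>i<n. W i)" using I(2) by blast
  have "x \<notin> (\<Union>i<n. W i) \<Longrightarrow> \<psi> x = 0" for x using F \<psi>(4) by blast
  then have "\<psi> \<in> subordinate (\<Union>i<n. W i)" using \<psi>(1) by (simp add: subordinate_def)
  then have "L \<psi> \<le> open_content L (\<Union>i<n. W i)" by (rule le_open_content)
  also have "\<dots> \<le> (\<Sum>i<n. open_content L (W i))"
  proof (induction n)
    case (Suc n)
    have "open (\<Union>i<n. W i)" using assms(1) by blast
    then have "open_content L ((\<Union>i<n. W i) \<union> W n) \<le> open_content L (\<Union>i<n. W i) + open_content L (W n)"
      using open_content_subadditive assms(1) by blast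
    then show ?case using Suc by (simp add: lessThan_Suc Un_commute)
  qed (simp add: open_content_empty)
  finally show "L \<psi> \<le> S" using assms(2)[of n] by linarith
qed

lemma outer_content_le: "open W \<Longrightarrow> A \<subseteq> W \<Longrightarrow> outer_content L A \<le> open_content L W"
  unfolding outer_content_def
  by (rule cInf_lower) (auto simp: bdd_below_def intro: open_content_bounds[THEN conjunct1])

lemma outer_content_greatest:
  "(\<And>W. open W \<Longrightarrow> A \<subseteq> W \<Longrightarrow> c \<le> open_content L W) \<Longrightarrow> c \<le> outer_content L A"
  unfolding outer_content_def by (rule cInf_greatest) auto

lemma outer_content_nonneg: "0 \<le> outer_content L A"
  using open_content_bounds by (intro outer_content_greatest) auto

lemma outer_content_mono: "A \<subseteq> B \<Longrightarrow> outer_content L A \<le> outer_content L B"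
  by (rule outer_content_greatest) (auto intro: outer_content_le)

lemma outer_content_open: "open W \<Longrightarrow> outer_content L W = open_content L W"
  by (auto intro: antisym outer_content_le outer_content_greatest open_content_mono)

lemma outer_content_approx:
  assumes "t > 0"
  obtains W where "open W" "A \<subseteq> W" "open_content L W < outer_content L A + t"
  using outer_content_greatest[of A "outer_content L A + t"] assms that by force

lemma outer_content_subadditive: "outer_content L (A \<union> B) \<le> outer_content L A + outer_content L B"
proof (rule field_le_epsilon)
  fix t :: real assume "t > 0"
  then obtain W1 W2 where W1: "open W1" "A \<subseteq> W1" "open_content L W1 < outer_content L A + t/2"
    and W2: "open W2" "B \<subseteq> W2" "open_content L W2 < outer_content L B + t/2"
    using outer_content_approx[of "t/2"] by (metis half_gt_zero)
  have "outer_content L (A \<union> B) \<le> open_content L (W1 \<union> W2)"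
    using W1 W2 by (intro outer_content_le) auto
  also have "\<dots> \<le> open_content L W1 + open_content L W2"
    using open_content_subadditive W1 W2 by auto
  finally show "outer_content L (A \<union> B) \<le> outer_content L A + outer_content L B + t"
    using W1 W2 by linarith
qed

lemma outer_content_countably_subadditive:
  assumes "summable (\<lambda>i. outer_content L (A i))"
  shows "outer_content L (\<Union>i. A i) \<le> (\<Sum>i. outer_content L (A i))"
proof (rule field_le_epsilon)
  fix t :: real assume "t > 0"
  have "\<exists>W. open W \<and> A i \<subseteq> W \<and> open_content L W < outer_content L (A i) + t / 2 ^ Suc i" for i
  proof -
    have "t / 2 ^ Suc i > 0" using \<open>t > 0\<close> by simp
    then obtain W where "open W" "A i \<subseteq> W" "open_content L W < outer_content L (A i) + t / 2 ^ Suc i"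
      by (rule outer_content_approx)
    then show ?thesis by blast
  qed
  then obtain W where W': "\<forall>i. open (W i) \<and> A i \<subseteq> W i \<and>
      open_content L (W i) < outer_content L (A i) + t / 2 ^ Suc i"
    using choice[of "\<lambda>i W. open W \<and> A i \<subseteq> W \<and> open_content L W < outer_content L (A i) + t / 2 ^ Suc i"]
    by blast
  then have W: "\<And>i. open (W i)" "\<And>i. A i \<subseteq> W i"
    "\<And>i. open_content L (W i) < outer_content L (A i) + t / 2 ^ Suc i"
    by blast+
  have "(\<Sum>i<n. open_content L (W i)) \<le> (\<Sum>i. outer_content L (A i)) + t" for n
  proof -
    have "(\<Sum>i<n. open_content L (W i)) \<le> (\<Sum>i<n. outer_content L (A i)) + (\<Sum>i<n. t / 2 ^ Suc i)"
      using W(3) by (simp add: sum.distrib[symmetric] sum_mono less_imp_le)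
    also have "(\<Sum>i<n. t / 2 ^ Suc i) = t * (1 - (1/2)^n)"
      by (induction n) (simp_all add: field_simps)
    also have "\<dots> \<le> t" using \<open>t > 0\<close> by (simp add: mult_le_cancel_left1)
    also have "(\<Sum>i<n. outer_content L (A i)) \<le> (\<Sum>i. outer_content L (A i))"
      using assms outer_content_nonneg by (intro sum_le_suminf) auto
    finally show ?thesis by linarith
  qed
  then have "open_content L (\<Union>i. W i) \<le> (\<Sum>i. outer_content L (A i)) + t"
    by (rule open_content_UN_le[OF W(1)])
  moreover have "outer_content L (\<Union>i. A i) \<le> open_content L (\<Union>i. W i)"
    using W(1,2) by (intro outer_content_le) auto
  ultimately show "outer_content L (\<Union>i. A i) \<le> (\<Sum>i. outer_content L (A i)) + t" by linarith
qed

text \<open>Given W \<supseteq> A, approximate open_content L (W \<inter> G) by \<psi> supported in a closed F \<subseteq> W \<inter> G, and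
  open_content L (W - F) \<supseteq> A - G by \<eta>; then \<psi> + \<eta> is subordinate to W.\<close>
lemma outer_content_split_open:
  assumes "open G"
  shows "outer_content L (A \<inter> G) + outer_content L (A - G) \<le> outer_content L A"
proof (rule field_le_epsilon)
  fix e :: real assume "e > 0"
  define t where "t = e / 4"
  have t: "t > 0" using \<open>e > 0\<close> by (simp add: t_def)
  obtain W where W: "open W" "A \<subseteq> W" "open_content L W < outer_content L A + t"
    using outer_content_approx[OF t] by blast
  obtain \<phi> where \<phi>: "\<phi> \<in> subordinate (W \<inter> G)" "open_content L (W \<inter> G) - t < L \<phi>"
    using open_content_approx[OF t] by blast
  define \<psi> where "\<psi> x = max (\<phi> x - t) 0" for x
  define F where "F = {x. t \<le> \<phi> x}"
  have \<psi>: "\<psi> \<in> subordinate (W \<inter> G)" "L \<phi> - t \<le> L \<psi>" "closed F" "F \<subseteq> W \<inter> G"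
    unfolding \<psi>_def F_def using truncate_subordinate[OF \<phi>(1) t] by auto
  obtain \<eta> where \<eta>: "\<eta> \<in> subordinate (W - F)" "open_content L (W - F) - t < L \<eta>"
    using open_content_approx[OF t] by blast
  have cont: "continuous_on UNIV \<psi>" "continuous_on UNIV \<eta>"
    using \<psi>(1) \<eta>(1) by (auto simp: subordinate_def)
  have "\<psi> x + \<eta> x \<le> 1" for x
  proof (cases "x \<in> F")
    case True
    then have "\<eta> x = 0" using \<eta>(1) by (simp add: subordinate_def)
    then show ?thesis using \<psi>(1) by (simp add: subordinate_def)
  next
    case False
    then have "\<psi> x = 0" by (simp add: \<psi>_def F_def)
    then show ?thesis using \<eta>(1) by (simp add: subordinate_def)
  qed
  then have "(\<lambda>x. \<psi> x + \<eta> x) \<in> subordinate W"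
    using cont \<psi>(1) \<eta>(1) by (auto simp: subordinate_def intro!: continuous_intros)
  then have "L \<psi> + L \<eta> \<le> open_content L W"
    using additive[OF cont] by (metis le_open_content)
  moreover have "outer_content L (A \<inter> G) \<le> open_content L (W \<inter> G)"
    using W assms by (intro outer_content_le) auto
  moreover have "outer_content L (A - G) \<le> open_content L (W - F)"
    using W \<psi>(3,4) by (intro outer_content_le) auto
  ultimately show "outer_content L (A \<inter> G) + outer_content L (A - G) \<le> outer_content L A + e"
    using W(3) \<phi>(2) \<eta>(2) \<psi>(2) t_def by linarith
qed

lemma outer_measure_space_outer_content:
  "outer_measure_space (Pow UNIV) (\<lambda>A. ennreal (outer_content L A))"
  unfolding outer_measure_space_def
proof (intro conjI)
  show "positive (Pow UNIV) (\<lambda>A. ennreal (outer_content L A))"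
    using outer_content_open[of "{}"] open_content_empty by (simp add: positive_def)
  show "increasing (Pow UNIV) (\<lambda>A. ennreal (outer_content L A))"
    by (auto simp: increasing_def intro!: ennreal_leI outer_content_mono)
  show "countably_subadditive (Pow UNIV) (\<lambda>A. ennreal (outer_content L A))"
    unfolding countably_subadditive_def
  proof (intro allI impI)
    fix A :: "nat \<Rightarrow> 'a set"
    show "ennreal (outer_content L (\<Union>i. A i)) \<le> (\<Sum>i. ennreal (outer_content L (A i)))"
    proof (cases "(\<Sum>i. ennreal (outer_content L (A i))) = top")
      case False
      then have "summable (\<lambda>i. outer_content L (A i))"
        by (rule summable_suminf_not_top[OF outer_content_nonneg])
      then show ?thesis
        using outer_content_countably_subadditive suminf_ennreal[OF outer_content_nonneg False]
        by (simp add: ennreal_leI)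
    qed simp
  qed
qed

lemma open_in_lambda_system:
  assumes "open G"
  shows "G \<in> lambda_system UNIV (Pow UNIV) (\<lambda>A. ennreal (outer_content L A))"
  unfolding lambda_system_def
proof (intro CollectI conjI ballI)
  fix A :: "'a set"
  have "outer_content L A \<le> outer_content L (A \<inter> G) + outer_content L (A - G)"
    using outer_content_subadditive[of "A \<inter> G" "A - G"] by (simp add: Int_Diff_Un)
  then have "outer_content L (A \<inter> G) + outer_content L (A - G) = outer_content L A"
    using outer_content_split_open[OF assms, of A] by linarith
  moreover have "(UNIV - G) \<inter> A = A - G" by auto
  ultimately show "ennreal (outer_content L (G \<inter> A)) + ennreal (outer_content L ((UNIV - G) \<inter> A))
      = ennreal (outer_content L A)"
    using outer_content_nonneg by (simp add: Int_commute flip: ennreal_plus)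
qed simp

lemma borel_measure_of_functional:
  obtains M where "sets M = sets borel" "\<And>A. A \<in> sets borel \<Longrightarrow> emeasure M A = outer_content L A"
proof -
  define f where "f A = ennreal (outer_content L A)" for A
  have ms: "measure_space UNIV (lambda_system UNIV (Pow UNIV) f) f"
    unfolding f_def by (rule sigma_algebra.caratheodory_lemma[OF sigma_algebra_Pow outer_measure_space_outer_content])
  then have "sets borel \<subseteq> lambda_system UNIV (Pow UNIV) f"
    unfolding sets_borel f_def using open_in_lambda_system
    by (intro sigma_algebra.sigma_sets_subset) (auto simp: measure_space_def)
  moreover have borel: "sigma_algebra UNIV (sets (borel :: 'a measure))"
    using sets.sigma_algebra_axioms[of borel] by simp
  ultimately have "measure_space UNIV (sets borel) f"
    using measure_down[OF ms] by blast
  then show thesis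
    using that[of "measure_of UNIV (sets borel) f"] sigma_algebra.sets_measure_of_eq[OF borel]
    by (auto simp: measure_space_def emeasure_measure_of_sigma f_def)
qed

lemma outer_content_Inter_ge:
  assumes "\<And>n. closed (C n)" "decseq C"
    and "\<And>n \<phi>. continuous_on UNIV \<phi> \<Longrightarrow> (\<And>x. indicator (C n) x \<le> \<phi> x) \<Longrightarrow> c \<le> L \<phi>"
  shows "c \<le> outer_content L (\<Inter>n. C n)"
proof (rule outer_content_greatest)
  fix W assume W: "open W" "(\<Inter>n. C n) \<subseteq> W"
  obtain m where "C m \<subseteq> W"
    using closed_decseq_subset_open[OF closed_imp_compact assms(1,2) W] assms(1) by blast
  then obtain \<phi> where \<phi>: "\<phi> \<in> subordinate W" "\<And>x. indicator (C m) x \<le> \<phi> x"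
    using urysohn_subordinate[OF W(1) assms(1)] by blast
  then have "c \<le> L \<phi>" by (intro assms(3)[of \<phi> m]) (auto simp: subordinate_def)
  then show "c \<le> open_content L W" using le_open_content[OF \<phi>(1)] by linarith
qed

context
  fixes h g :: "'a \<Rightarrow> 'a"
  assumes homeomorphism: "homeomorphism UNIV UNIV h g"
    and invariant: "\<And>f. continuous_on UNIV f \<Longrightarrow> L (\<lambda>x. f (h x)) = L f"
begin

lemma open_content_vimage: "open_content L (h -` V) = open_content L V"
proof (rule antisym)
  have hg: "\<And>x. g (h x) = x" and cont: "continuous_on UNIV h" "continuous_on UNIV g"
    using homeomorphism by (auto simp: homeomorphism_def)
  show "open_content L V \<le> open_content L (h -` V)"
  proof (rule open_content_least)
    fix \<phi> assume \<phi>: "\<phi> \<in> subordinate V"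
    then have "continuous_on UNIV \<phi>" by (simp add: subordinate_def)
    moreover from this have "(\<lambda>x. \<phi> (h x)) \<in> subordinate (h -` V)"
      using \<phi> continuous_on_compose2[OF _ cont(1)] by (auto simp: subordinate_def)
    ultimately show "L \<phi> \<le> open_content L (h -` V)" using le_open_content invariant by metis
  qed
  show "open_content L (h -` V) \<le> open_content L V"
  proof (rule open_content_least)
    fix \<psi> assume \<psi>: "\<psi> \<in> subordinate (h -` V)"
    then have "continuous_on UNIV (\<lambda>y. \<psi> (g y))"
      using continuous_on_compose2[OF _ cont(2)] by (auto simp: subordinate_def)
    moreover from this have "(\<lambda>y. \<psi> (g y)) \<in> subordinate V"
      using \<psi> homeomorphism by (auto simp: subordinate_def homeomorphism_def)
    ultimately show "L \<psi> \<le> open_content L V"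
      using le_open_content invariant[of "\<lambda>y. \<psi> (g y)"] hg by simp
  qed
qed

lemma outer_content_vimage: "outer_content L (h -` A) = outer_content L A"
proof (rule antisym)
  have hg: "\<And>x. g (h x) = x" "\<And>y. h (g y) = y" and cont: "continuous_on UNIV h" "continuous_on UNIV g"
    using homeomorphism by (auto simp: homeomorphism_def)
  show "outer_content L (h -` A) \<le> outer_content L A"
  proof (rule outer_content_greatest)
    fix W assume W: "open W" "A \<subseteq> W"
    then have "outer_content L (h -` A) \<le> open_content L (h -` W)"
      using cont(1) by (intro outer_content_le) (auto simp: open_vimage)
    then show "outer_content L (h -` A) \<le> open_content L W" by (simp add: open_content_vimage)
  qed
  show "outer_content L A \<le> outer_content L (h -` A)"
  proof (rule outer_content_greatest)
    fix W assume W: "open W" "h -` A \<subseteq> W"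
    have "h -` (g -` W) = W" using hg by auto
    moreover have "A \<subseteq> g -` W" using W(2) hg by (metis subset_vimage_iff vimageI2 vimage_mono)
    ultimately show "outer_content L A \<le> open_content L W"
      using outer_content_le[of "g -` W" A] W(1) cont(2) open_content_vimage[of "g -` W"]
      by (simp add: open_vimage)
  qed
qed

lemma invariant_measure_of_functional:
  obtains M where "M \<in> inv_prob_measures h" "\<And>A. A \<in> sets borel \<Longrightarrow> emeasure M A = outer_content L A"
proof -
  obtain M where M: "sets M = sets borel" "\<And>A. A \<in> sets borel \<Longrightarrow> emeasure M A = outer_content L A"
    using borel_measure_of_functional by blast
  have "h \<in> borel_measurable borel"
    using homeomorphism by (intro borel_measurable_continuous_onI) (simp add: homeomorphism_def)
  then have "A \<in> sets borel \<Longrightarrow> emeasure M (h -` A) = emeasure M A" for A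
    using M(2) outer_content_vimage measurable_sets[of h borel borel A] by simp
  moreover have "prob_space M"
    using M sets_eq_imp_space_eq[OF M(1)] outer_content_open[of UNIV] open_content_UNIV
    by (intro prob_spaceI) simp
  ultimately show thesis using M by (intro that[of M]) (auto simp: inv_prob_measures_def)
qed

end

end

lemma inv_prob_measuresD:
  assumes "\<mu> \<in> inv_prob_measures h"
  shows "prob_space \<mu>" "sets \<mu> = sets borel" "\<And>A. A \<in> sets borel \<Longrightarrow> emeasure \<mu> (h -` A) = emeasure \<mu> A"
  using assms by (auto simp: inv_prob_measures_def)

lemma inv_prob_measure_mono:
  assumes "\<mu> \<in> inv_prob_measures h" "A \<subseteq> B" "B \<in> sets borel"
  shows "measure \<mu> A \<le> measure \<mu> B"
  using prob_space.finite_measure[OF inv_prob_measuresD(1)[OF assms(1)]] assms(2,3)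
    inv_prob_measuresD(2)[OF assms(1)] by (simp add: finite_measure.finite_measure_mono)

text \<open>Discontinuous f are sent to 0, so that every coordinate of integral_functional \<mu> is bounded
  independently of \<mu>, as the compactness argument below requires.\<close>
definition integral_functional :: "'a::topological_space measure \<Rightarrow> ('a \<Rightarrow> real) \<Rightarrow> real" where
  "integral_functional \<mu> f = (if continuous_on UNIV f then integral\<^sup>L \<mu> f else 0)"

lemma integrable_continuous_compact_space:
  fixes f :: "'a::metric_space \<Rightarrow> real"
  assumes "compact (UNIV :: 'a set)" "continuous_on UNIV f" "prob_space \<mu>" "sets \<mu> = sets borel"
  shows "integrable \<mu> f"
proof -
  obtain B where "\<And>x. \<bar>f x\<bar> \<le> B"
    using compact_imp_bounded[OF compact_continuous_image[OF assms(2,1)]] by (auto simp: bounded_real)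
  moreover have "f \<in> borel_measurable \<mu>"
    unfolding measurable_cong_sets[OF assms(4) refl] using assms(2) by (rule borel_measurable_continuous_onI)
  ultimately show ?thesis
    by (intro finite_measure.integrable_const_bound[OF prob_space.finite_measure[OF assms(3)]]) auto
qed

lemma abs_integral_continuous_le:
  fixes f :: "'a::metric_space \<Rightarrow> real"
  assumes "compact (UNIV :: 'a set)" "continuous_on UNIV f" "prob_space \<mu>" "sets \<mu> = sets borel"
    and "\<And>x. \<bar>f x\<bar> \<le> B"
  shows "\<bar>integral\<^sup>L \<mu> f\<bar> \<le> B"
proof -
  have "\<bar>integral\<^sup>L \<mu> f\<bar> \<le> integral\<^sup>L \<mu> (\<lambda>x. B)"
    using integrable_continuous_compact_space[OF assms(1-4)] assms(5) prob_space.finite_measure[OF assms(3)]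
    by (intro order_trans[OF integral_abs_bound] integral_mono) (auto intro: finite_measure.integrable_const)
  then show ?thesis using prob_space.prob_space[OF assms(3)] by simp
qed

text \<open>The integration functionals of probability measures lie in a compact box of the product space
  of all functionals; hence a decreasing sequence of nonempty sets of such measures has a common
  weak-* cluster point.\<close>
lemma integral_functionals_cluster_point:
  fixes Ms :: "nat \<Rightarrow> 'a::metric_space measure set"
  assumes "compact (UNIV :: 'a set)" "decseq Ms" "\<And>n. Ms n \<noteq> {}"
    and "\<And>n \<mu>. \<mu> \<in> Ms n \<Longrightarrow> prob_space \<mu> \<and> sets \<mu> = sets borel"
  obtains L where "\<And>n. L \<in> closure (integral_functional ` Ms n)"
proof -
  define bound where "bound f = Sup (range (\<lambda>x. \<bar>f x\<bar>))" for f :: "'a \<Rightarrow> real"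
  define Box where "Box = Pi UNIV (\<lambda>f. if continuous_on UNIV f then {-bound f..bound f} else {0})"
  have "compactin (product_topology (\<lambda>_. euclidean) UNIV)
      (PiE UNIV (\<lambda>f. if continuous_on UNIV f then {-bound f..bound f} else {0}))"
    by (simp add: compactin_PiE)
  then have "compact Box" by (simp add: Box_def euclidean_product_topology PiE_UNIV_domain)
  have "integral_functional \<mu> \<in> Box" if "\<mu> \<in> Ms n" for \<mu> n
  proof -
    have "integral_functional \<mu> f \<in> {-bound f..bound f}" if "continuous_on UNIV f" for f
    proof -
      have "continuous_on UNIV (\<lambda>x. \<bar>f x\<bar>)" using that by (intro continuous_intros)
      then have "bounded (range (\<lambda>x. \<bar>f x\<bar>))"
        using compact_imp_bounded compact_continuous_image assms(1) by blast
      then have "\<bar>f x\<bar> \<le> bound f" for x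
        unfolding bound_def by (intro cSup_upper) (auto simp: bounded_imp_bdd_above)
      then have bound: "\<bar>integral\<^sup>L \<mu> f\<bar> \<le> bound f"
        using abs_integral_continuous_le[OF assms(1) that] assms(4)[OF \<open>\<mu> \<in> Ms n\<close>] by blast
      show ?thesis using that abs_le_D1[OF bound] abs_le_D2[OF bound] by (simp add: integral_functional_def)
    qed
    then show ?thesis unfolding Box_def by (auto simp: integral_functional_def)
  qed
  note in_Box = this
  define T where "T n = closure (integral_functional ` Ms n)" for n
  have "Box \<inter> \<Inter>(T ` UNIV) \<noteq> {}"
  proof (rule compact_imp_fip_image[OF \<open>compact Box\<close>])
    show "closed (T n)" for n by (simp add: T_def)
    fix I :: "nat set" assume "finite I"
    then obtain k where k: "I \<subseteq> {..<k}" using finite_nat_bounded by blast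
    obtain \<mu> where \<mu>: "\<mu> \<in> Ms k" using assms(3) by blast
    have "integral_functional \<mu> \<in> T i" if "i \<in> I" for i
    proof -
      have "i \<le> k" using k that by auto
      then have "\<mu> \<in> Ms i" using \<mu> decseqD[OF assms(2)] by blast
      then show ?thesis unfolding T_def by (intro subsetD[OF closure_subset] imageI)
    qed
    then show "Box \<inter> \<Inter>(T ` I) \<noteq> {}" using in_Box[OF \<mu>] by blast
  qed
  then show thesis using that by (auto simp: T_def)
qed

lemma integral_comp_invariant:
  fixes f :: "'a::topological_space \<Rightarrow> real"
  assumes "\<mu> \<in> inv_prob_measures h" "h \<in> borel_measurable borel" "f \<in> borel_measurable borel"
  shows "integral\<^sup>L \<mu> (\<lambda>x. f (h x)) = integral\<^sup>L \<mu> f"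
proof -
  have sets: "sets \<mu> = sets borel" using inv_prob_measuresD(2)[OF assms(1)] .
  have h: "h \<in> \<mu> \<rightarrow>\<^sub>M borel" using assms(2) by (simp add: measurable_cong_sets[OF sets refl])
  have "distr \<mu> borel h = \<mu>"
  proof (rule measure_eqI)
    fix A assume "A \<in> sets (distr \<mu> borel h)"
    then show "emeasure (distr \<mu> borel h) A = emeasure \<mu> A"
      using emeasure_distr[OF h] inv_prob_measuresD(3)[OF assms(1)] sets_eq_imp_space_eq[OF sets] by simp
  qed (simp add: sets)
  then show ?thesis using integral_distr[OF h assms(3)] by simp
qed

context
  fixes S :: "'a::metric_space measure set" and L :: "('a \<Rightarrow> real) \<Rightarrow> real"
  assumes compact_UNIV: "compact (UNIV :: 'a set)"
    and prob: "\<And>\<mu>. \<mu> \<in> S \<Longrightarrow> prob_space \<mu> \<and> sets \<mu> = sets borel"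
    and limit: "L \<in> closure (integral_functional ` S)"
begin

lemma limit_in_closed:
  "closed P \<Longrightarrow> (\<And>\<mu>. \<mu> \<in> S \<Longrightarrow> integral_functional \<mu> \<in> P) \<Longrightarrow> L \<in> P"
  using closure_minimal[of "integral_functional ` S" P] limit by blast

lemma integrable_continuous_of_mem:
  fixes f :: "'a \<Rightarrow> real"
  assumes "\<mu> \<in> S" "continuous_on UNIV f"
  shows "integrable \<mu> f"
  using integrable_continuous_compact_space[OF compact_UNIV assms(2)] prob[OF assms(1)] by blast

lemma positive_functional_limit: "positive_functional L"
proof
  show "compact (UNIV :: 'a set)" by (rule compact_UNIV)
next
  fix f g :: "'a \<Rightarrow> real" assume f: "continuous_on UNIV f" and g: "continuous_on UNIV g"
  then have fg: "continuous_on UNIV (\<lambda>x. f x + g x)" by (intro continuous_intros)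
  have "integral_functional \<mu> (\<lambda>x. f x + g x) = integral_functional \<mu> f + integral_functional \<mu> g"
    if "\<mu> \<in> S" for \<mu>
    using Bochner_Integration.integral_add[OF integrable_continuous_of_mem[OF that f]
        integrable_continuous_of_mem[OF that g]] f g fg
    by (simp add: integral_functional_def)
  moreover have "closed {L :: ('a \<Rightarrow> real) \<Rightarrow> real. L (\<lambda>x. f x + g x) = L f + L g}"
    by (intro closed_Collect_eq continuous_on_add continuous_on_product_coordinates)
  ultimately show "L (\<lambda>x. f x + g x) = L f + L g" using limit_in_closed by blast
next
  fix f g :: "'a \<Rightarrow> real" assume f: "continuous_on UNIV f" and g: "continuous_on UNIV g"
    and le: "\<And>x. f x \<le> g x"
  have "integral_functional \<mu> f \<le> integral_functional \<mu> g" if "\<mu> \<in> S" for \<mu>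
    using integral_mono[OF integrable_continuous_of_mem[OF that f]
        integrable_continuous_of_mem[OF that g] le] f g
    by (simp add: integral_functional_def)
  moreover have "closed {L :: ('a \<Rightarrow> real) \<Rightarrow> real. L f \<le> L g}" by (intro closed_Collect_le continuous_on_product_coordinates)
  ultimately show "L f \<le> L g" using limit_in_closed by blast
next
  fix c :: real
  have "integral_functional \<mu> (\<lambda>x. c) = c" if "\<mu> \<in> S" for \<mu>
    using prob_space.prob_space[of \<mu>] prob[OF that] by (simp add: integral_functional_def)
  moreover have "closed {L :: ('a \<Rightarrow> real) \<Rightarrow> real. L (\<lambda>x. c) = c}" by (intro closed_Collect_eq continuous_on_product_coordinates continuous_on_const)
  ultimately show "L (\<lambda>x. c) = c" using limit_in_closed by blast
qed

lemma invariant_limit: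
  fixes f :: "'a \<Rightarrow> real"
  assumes "S \<subseteq> inv_prob_measures h" "continuous_on UNIV h" "continuous_on UNIV f"
  shows "L (\<lambda>x. f (h x)) = L f"
proof -
  have "continuous_on UNIV (\<lambda>x. f (h x))" using continuous_on_compose2[OF assms(3,2)] by simp
  moreover have "integral\<^sup>L \<mu> (\<lambda>x. f (h x)) = integral\<^sup>L \<mu> f" if "\<mu> \<in> S" for \<mu>
    using integral_comp_invariant[of \<mu> h f] assms that
    by (auto intro: borel_measurable_continuous_onI)
  ultimately have "integral_functional \<mu> (\<lambda>x. f (h x)) = integral_functional \<mu> f" if "\<mu> \<in> S" for \<mu>
    using that assms(3) by (simp add: integral_functional_def)
  moreover have "closed {L :: ('a \<Rightarrow> real) \<Rightarrow> real. L (\<lambda>x. f (h x)) = L f}" by (intro closed_Collect_eq continuous_on_product_coordinates)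
  ultimately show ?thesis using limit_in_closed by blast
qed

lemma measure_le_limit:
  fixes \<phi> :: "'a \<Rightarrow> real"
  assumes "C \<in> sets borel" "\<And>\<mu>. \<mu> \<in> S \<Longrightarrow> c \<le> measure \<mu> C"
    and "continuous_on UNIV \<phi>" "\<And>x. indicator C x \<le> \<phi> x"
  shows "c \<le> L \<phi>"
proof -
  have "c \<le> integral\<^sup>L \<mu> \<phi>" if \<mu>: "\<mu> \<in> S" for \<mu>
  proof -
    have sets: "sets \<mu> = sets borel" and fin: "finite_measure \<mu>"
      using prob[OF \<mu>] prob_space.finite_measure by auto
    have "integrable \<mu> (indicator C :: 'a \<Rightarrow> real)"
      using assms(1) sets finite_measure.emeasure_finite[OF fin, of C]
      by (intro integrable_real_indicator) (auto simp: less_top)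
    then have "measure \<mu> C \<le> integral\<^sup>L \<mu> \<phi>"
      using integral_mono[OF _ integrable_continuous_of_mem[OF \<mu> assms(3)] assms(4)] sets_eq_imp_space_eq[OF sets]
      by simp
    then show ?thesis using assms(2)[OF \<mu>] by linarith
  qed
  then have "c \<le> integral_functional \<mu> \<phi>" if "\<mu> \<in> S" for \<mu>
    using that assms(3) by (simp add: integral_functional_def)
  moreover have "closed {L :: ('a \<Rightarrow> real) \<Rightarrow> real. c \<le> L \<phi>}" by (intro closed_Collect_le continuous_on_product_coordinates continuous_on_const)
  ultimately show ?thesis using limit_in_closed by blast
qed

end

lemma inv_prob_measures_uniformly_small:
  fixes h :: "'a::metric_space \<Rightarrow> 'a" and C :: "nat \<Rightarrow> 'a set"
  assumes compact: "compact (UNIV :: 'a set)" and hom: "homeomorphism UNIV UNIV h g"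
    and closed: "\<And>n. closed (C n)" and dec: "decseq C"
    and null: "\<And>\<mu>. \<mu> \<in> inv_prob_measures h \<Longrightarrow> emeasure \<mu> (\<Inter>n. C n) = 0" and "\<epsilon> > 0"
  shows "\<exists>n. \<forall>\<mu>\<in>inv_prob_measures h. measure \<mu> (C n) < \<epsilon>"
proof (rule ccontr)
  assume large: "\<not> ?thesis"
  \<comment> \<open>A common cluster point of the measures charging C n with mass \<ge> \<epsilon> yields an invariant measure
    charging their intersection with mass \<ge> \<epsilon>.\<close>
  define Ms where "Ms n = {\<mu> \<in> inv_prob_measures h. \<epsilon> \<le> measure \<mu> (C n)}" for n
  have prob: "prob_space \<mu> \<and> sets \<mu> = sets borel" if "\<mu> \<in> Ms n" for \<mu> n
  proof -
    have "\<mu> \<in> inv_prob_measures h" using that by (simp add: Ms_def)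
    then show ?thesis using inv_prob_measuresD(1,2) by blast
  qed
  have nonempty: "Ms n \<noteq> {}" for n using large by (auto simp: Ms_def not_less)
  have "Ms (Suc n) \<subseteq> Ms n" for n
  proof
    fix \<mu> assume \<mu>: "\<mu> \<in> Ms (Suc n)"
    have "C (Suc n) \<subseteq> C n" using decseqD[OF dec, of n "Suc n"] by simp
    then have "measure \<mu> (C (Suc n)) \<le> measure \<mu> (C n)"
      using \<mu> closed[of n] inv_prob_measure_mono[of \<mu> h] by (simp add: Ms_def)
    then show "\<mu> \<in> Ms n" using \<mu> by (simp add: Ms_def)
  qed
  then have "decseq Ms" by (rule decseq_SucI)
  then obtain L where L: "\<And>n. L \<in> closure (integral_functional ` Ms n)"
  proof (rule integral_functionals_cluster_point[OF compact])
    show "Ms n \<noteq> {}" for n by (rule nonempty)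
    show "prob_space \<mu> \<and> sets \<mu> = sets borel" if "\<mu> \<in> Ms n" for n \<mu> using prob[OF that] .
  qed (rule that)
  interpret positive_functional L by (rule positive_functional_limit[OF compact prob[of _ 0] L])
  have "Ms 0 \<subseteq> inv_prob_measures h" by (auto simp: Ms_def)
  moreover have "continuous_on UNIV h" using hom by (simp add: homeomorphism_def)
  ultimately have "L (\<lambda>x. f (h x)) = L f" if "continuous_on UNIV f" for f :: "'a \<Rightarrow> real"
    using invariant_limit[OF compact prob[of _ 0] L] that by blast
  then obtain M where M: "M \<in> inv_prob_measures h" "\<And>A. A \<in> sets borel \<Longrightarrow> emeasure M A = outer_content L A"
    using invariant_measure_of_functional[OF hom] by blast
  have "\<epsilon> \<le> L \<phi>" if "continuous_on UNIV \<phi>" "\<And>x. indicator (C n) x \<le> \<phi> x" for n \<phi>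
    by (rule measure_le_limit[OF compact prob[of _ n] L[of n] _ _ that])
      (use closed[of n] in \<open>auto simp: Ms_def\<close>)
  then have "\<epsilon> \<le> outer_content L (\<Inter>n. C n)" by (rule outer_content_Inter_ge[OF closed dec])
  then have "ennreal \<epsilon> \<le> emeasure M (\<Inter>n. C n)" using M(2) closed by (simp add: ennreal_leI)
  then show False using null[OF M(1)] \<open>\<epsilon> > 0\<close> by simp
qed

lemma uniformly_small_collar:
  fixes h :: "'a::metric_space \<Rightarrow> 'a"
  assumes "compact (UNIV :: 'a set)" "homeomorphism UNIV UNIV h g"
    and S: "closed S" "S \<noteq> {}" and "closed T" and null: "universally_null h (S \<inter> T)" and "\<epsilon> > 0"
  obtains \<delta> where "\<delta> > 0" "\<And>\<mu>. \<mu> \<in> inv_prob_measures h \<Longrightarrow> measure \<mu> ({x. infdist x S \<le> \<delta>} \<inter> T) < \<epsilon>"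
proof -
  define C where "C n = {x. infdist x S \<le> 1 / real (Suc n)} \<inter> T" for n
  have closed: "closed (C n)" for n
    unfolding C_def using \<open>closed T\<close> by (intro closed_Int closed_Collect_le continuous_intros)
  have "decseq C"
    by (rule decseq_SucI) (auto simp: C_def intro: order_trans[OF _ frac_le[of 1]])
  have "(\<Inter>n. C n) \<subseteq> S \<inter> T"
  proof
    fix x assume x: "x \<in> (\<Inter>n. C n)"
    have bound: "infdist x S \<le> inverse (real (Suc n))" for n
      using x by (auto simp: C_def inverse_eq_divide)
    have "infdist x S = 0"
    proof (rule ccontr)
      assume "infdist x S \<noteq> 0"
      then have "0 < infdist x S" using infdist_nonneg[of x S] by linarith
      then obtain n where "inverse (real (Suc n)) < infdist x S" using reals_Archimedean by blast
      then show False using bound[of n] by linarith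
    qed
    then have "x \<in> S" using in_closure_iff_infdist_zero[OF S(2)] closure_closed[OF S(1)] by simp
    then show "x \<in> S \<inter> T" using x by (auto simp: C_def)
  qed
  moreover have "S \<inter> T \<subseteq> (\<Inter>n. C n)" by (auto simp: C_def infdist_zero)
  ultimately have "(\<Inter>n. C n) = S \<inter> T" by (rule subset_antisym)
  then have "\<mu> \<in> inv_prob_measures h \<Longrightarrow> emeasure \<mu> (\<Inter>n. C n) = 0" for \<mu>
    using null by (simp add: universally_null_def)
  then obtain n where "\<forall>\<mu>\<in>inv_prob_measures h. measure \<mu> (C n) < \<epsilon>"
    using inv_prob_measures_uniformly_small[OF assms(1,2) closed \<open>decseq C\<close>] \<open>\<epsilon> > 0\<close> by blast
  then show thesis by (intro that[of "1 / real (Suc n)"]) (auto simp: C_def)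
qed

lemma inner_collar_small:
  fixes h :: "'a::metric_space \<Rightarrow> 'a"
  assumes "compact (UNIV :: 'a set)" "homeomorphism UNIV UNIV h g"
    and "open U" "U \<noteq> UNIV" "universally_null h (frontier U)" "\<epsilon> > 0"
  obtains \<delta> where "\<delta> > 0"
    "\<And>d \<mu>. d \<le> \<delta> \<Longrightarrow> \<mu> \<in> inv_prob_measures h \<Longrightarrow> measure \<mu> (U \<inter> {x. infdist x (- U) \<le> d}) < \<epsilon>"
proof -
  have "- U \<inter> closure U = frontier U" using assms(3) by (auto simp: frontier_def interior_open)
  moreover have "closed (- U)" "- U \<noteq> {}" using assms(3,4) by auto
  ultimately obtain \<delta> where "\<delta> > 0"
    and small: "\<And>\<mu>. \<mu> \<in> inv_prob_measures h \<Longrightarrow> measure \<mu> ({x. infdist x (- U) \<le> \<delta>} \<inter> closure U) < \<epsilon>"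
    using uniformly_small_collar[OF assms(1,2) _ _ closed_closure _ assms(6)] assms(5) by metis
  have "measure \<mu> (U \<inter> {x. infdist x (- U) \<le> d}) < \<epsilon>" if "d \<le> \<delta>" "\<mu> \<in> inv_prob_measures h" for d \<mu>
  proof -
    have "U \<inter> {x. infdist x (- U) \<le> d} \<subseteq> {x. infdist x (- U) \<le> \<delta>} \<inter> closure U"
      using that(1) closure_subset by auto
    moreover have "{x. infdist x (- U) \<le> \<delta>} \<inter> closure U \<in> sets borel"
      by (intro borel_closed closed_Int closed_Collect_le continuous_intros closed_closure)
    ultimately have "measure \<mu> (U \<inter> {x. infdist x (- U) \<le> d})
        \<le> measure \<mu> ({x. infdist x (- U) \<le> \<delta>} \<inter> closure U)"
      by (rule inv_prob_measure_mono[OF that(2)])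
    then show ?thesis using small[OF that(2)] by linarith
  qed
  with \<open>\<delta> > 0\<close> show thesis by (rule that)
qed

lemma infdist_pos_imp_mem: "0 < infdist x (- U) \<Longrightarrow> x \<in> U"
  by (metis ComplI infdist_zero less_irrefl)

lemma closed_subset_with_interior_uniformly_large:
  fixes h :: "'a::metric_space \<Rightarrow> 'a"
  assumes "compact (UNIV :: 'a set)" "homeomorphism UNIV UNIV h g"
    and "open U" "U \<noteq> {}" "universally_null h (frontier U)" "\<epsilon> > 0"
  obtains K where "closed K" "K \<subseteq> U" "interior K \<noteq> {}" "\<And>\<mu>. \<mu> \<in> inv_prob_measures h \<Longrightarrow> measure \<mu> (U - K) < \<epsilon>"
proof (cases "U = UNIV")
  case False
  obtain \<delta> where "\<delta> > 0"
    and small: "\<And>d \<mu>. d \<le> \<delta> \<Longrightarrow> \<mu> \<in> inv_prob_measures h \<Longrightarrow> measure \<mu> (U \<inter> {x. infdist x (- U) \<le> d}) < \<epsilon>"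
    using inner_collar_small[OF assms(1-3) False assms(5,6)] by blast
  obtain x0 where "x0 \<in> U" using assms(4) by blast
  then have "0 < infdist x0 (- U)"
    using infdist_pos_not_in_closed[of "- U" x0] assms(3) False by auto
  define d where "d = min \<delta> (infdist x0 (- U) / 2)"
  have d: "0 < d" "d \<le> \<delta>" "d < infdist x0 (- U)"
    using \<open>\<delta> > 0\<close> \<open>0 < infdist x0 (- U)\<close> by (auto simp: d_def)
  define K where "K = {x. d \<le> infdist x (- U)}"
  have "closed K" unfolding K_def by (intro closed_Collect_le continuous_intros)
  moreover have "K \<subseteq> U" using d(1) by (auto simp: K_def intro: infdist_pos_imp_mem)
  moreover have "interior K \<noteq> {}"
  proof -
    have "{x. d < infdist x (- U)} \<subseteq> K" by (auto simp: K_def)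
    moreover have "open {x. d < infdist x (- U)}" by (intro open_Collect_less continuous_intros)
    ultimately have "{x. d < infdist x (- U)} \<subseteq> interior K" by (rule interior_maximal)
    then show ?thesis using d(3) by blast
  qed
  moreover have "measure \<mu> (U - K) < \<epsilon>" if "\<mu> \<in> inv_prob_measures h" for \<mu>
  proof -
    have "U \<inter> {x. infdist x (- U) \<le> d} \<in> sets borel"
      using \<open>open U\<close> by (intro sets.Int borel_open borel_closed closed_Collect_le continuous_intros)
    moreover have "U - K \<subseteq> U \<inter> {x. infdist x (- U) \<le> d}" by (auto simp: K_def)
    ultimately have "measure \<mu> (U - K) \<le> measure \<mu> (U \<inter> {x. infdist x (- U) \<le> d})"
      using inv_prob_measure_mono[OF that] by blast
    then show ?thesis using small[OF d(2) that] by linarith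
  qed
  ultimately show thesis by (rule that)
next
  case True
  then show thesis using \<open>\<epsilon> > 0\<close> assms(4) by (intro that[of UNIV]) auto
qed


lemma open_subset_closure_uniformly_large:
  fixes h :: "'a::metric_space \<Rightarrow> 'a"
  assumes "compact (UNIV :: 'a set)" "homeomorphism UNIV UNIV h g"
    and "open U" "universally_null h (frontier U)" "\<epsilon> > 0"
  obtains E where "open E" "closure E \<subseteq> U" "\<And>\<mu>. \<mu> \<in> inv_prob_measures h \<Longrightarrow> measure \<mu> (U - closure E) < \<epsilon>"
proof (cases "U = UNIV")
  case False
  obtain \<delta> where "\<delta> > 0"
    and small: "\<And>d \<mu>. d \<le> \<delta> \<Longrightarrow> \<mu> \<in> inv_prob_measures h \<Longrightarrow> measure \<mu> (U \<inter> {x. infdist x (- U) \<le> d}) < \<epsilon>"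
    using inner_collar_small[OF assms(1-3) False assms(4,5)] by blast
  define E where "E = {x. \<delta> < infdist x (- U)}"
  have "open E" unfolding E_def by (intro open_Collect_less continuous_intros)
  have "closure E \<subseteq> {x. \<delta> \<le> infdist x (- U)}"
  proof (rule closure_minimal)
    show "E \<subseteq> {x. \<delta> \<le> infdist x (- U)}" by (auto simp: E_def)
    show "closed {x. \<delta> \<le> infdist x (- U)}" by (intro closed_Collect_le continuous_intros)
  qed
  also have "\<dots> \<subseteq> U"
  proof
    fix x assume "x \<in> {x. \<delta> \<le> infdist x (- U)}"
    then show "x \<in> U" using \<open>\<delta> > 0\<close> by (intro infdist_pos_imp_mem) simp
  qed
  finally have "closure E \<subseteq> U" .
  have "measure \<mu> (U - closure E) < \<epsilon>" if "\<mu> \<in> inv_prob_measures h" for \<mu>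
  proof -
    have "U \<inter> {x. infdist x (- U) \<le> \<delta>} \<in> sets borel"
      using \<open>open U\<close> by (intro sets.Int borel_open borel_closed closed_Collect_le continuous_intros)
    moreover have "U - closure E \<subseteq> U \<inter> {x. infdist x (- U) \<le> \<delta>}"
    proof
      fix x assume x: "x \<in> U - closure E"
      then have "x \<notin> E" using closure_subset[of E] by blast
      then show "x \<in> U \<inter> {x. infdist x (- U) \<le> \<delta>}" using x by (simp add: E_def not_less)
    qed
    ultimately have "measure \<mu> (U - closure E) \<le> measure \<mu> (U \<inter> {x. infdist x (- U) \<le> \<delta>})"
      using inv_prob_measure_mono[OF that] by blast
    then show ?thesis using small[OF order_refl that] by linarith
  qed
  with \<open>open E\<close> \<open>closure E \<subseteq> U\<close> show thesis by (rule that)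
next
  case True
  then show thesis using \<open>\<epsilon> > 0\<close> by (intro that[of UNIV]) auto
qed

lemma open_superset_uniformly_small:
  fixes h :: "'a::metric_space \<Rightarrow> 'a"
  assumes "compact (UNIV :: 'a set)" "homeomorphism UNIV UNIV h g"
    and "closed K" "universally_null h (frontier K)" "\<epsilon> > 0"
  obtains E where "open E" "K \<subseteq> E" "\<And>\<mu>. \<mu> \<in> inv_prob_measures h \<Longrightarrow> measure \<mu> (E - K) < \<epsilon>"
proof (cases "K = {}")
  case False
  have "K \<inter> closure (- K) = frontier K"
    using assms(3) by (auto simp: frontier_def closure_complement closure_closed)
  then obtain \<delta> where "\<delta> > 0"
    and small: "\<And>\<mu>. \<mu> \<in> inv_prob_measures h \<Longrightarrow> measure \<mu> ({x. infdist x K \<le> \<delta>} \<inter> closure (- K)) < \<epsilon>"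
    using uniformly_small_collar[OF assms(1,2,3) False closed_closure _ assms(5)] assms(4) by metis
  define E where "E = {x. infdist x K < \<delta>}"
  have "open E" unfolding E_def by (intro open_Collect_less continuous_intros)
  moreover have "K \<subseteq> E" using \<open>\<delta> > 0\<close> by (auto simp: E_def infdist_zero)
  moreover have "measure \<mu> (E - K) < \<epsilon>" if "\<mu> \<in> inv_prob_measures h" for \<mu>
  proof -
    have "{x. infdist x K \<le> \<delta>} \<inter> closure (- K) \<in> sets borel"
      by (intro borel_closed closed_Int closed_Collect_le continuous_intros closed_closure)
    moreover have "E - K \<subseteq> {x. infdist x K \<le> \<delta>} \<inter> closure (- K)"
      using closure_subset[of "- K"] by (auto simp: E_def)
    ultimately have "measure \<mu> (E - K) \<le> measure \<mu> ({x. infdist x K \<le> \<delta>} \<inter> closure (- K))"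
      using inv_prob_measure_mono[OF that] by blast
    then show ?thesis using small[OF that] by linarith
  qed
  ultimately show thesis by (rule that)
next
  case True
  then show thesis using \<open>\<epsilon> > 0\<close> by (intro that[of "{}"]) auto
qed

lemma continuous_on_funpow:
  fixes h :: "'a::topological_space \<Rightarrow> 'a"
  assumes "continuous_on UNIV h"
  shows "continuous_on UNIV (h ^^ k)"
proof (induction k)
  case (Suc k)
  have "h ^^ Suc k = h \<circ> (h ^^ k)" by simp
  then show ?case using continuous_on_compose[OF Suc] assms by (metis continuous_on_subset subset_UNIV)
qed (simp add: continuous_on_id)

text \<open>The orbit of a periodic point is a finite closed invariant set.\<close>
lemma minimal_map_no_periodic_points:
  fixes h :: "'a::t1_space \<Rightarrow> 'a"
  assumes "infinite (UNIV :: 'a set)" "minimal_map h" "0 < k"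
  shows "(h ^^ k) x \<noteq> x"
proof
  assume periodic: "(h ^^ k) x = x"
  define A where "A = (\<lambda>i. (h ^^ i) x) ` {..<k}"
  have "h ` A \<subseteq> A"
  proof
    fix y assume "y \<in> h ` A"
    then obtain i where i: "i < k" "y = (h ^^ Suc i) x" by (auto simp: A_def)
    show "y \<in> A"
    proof (cases "Suc i < k")
      case True
      then show ?thesis using i(2) by (auto simp: A_def simp del: funpow.simps)
    next
      case False
      then have "Suc i = k" using i(1) by simp
      then have "y = (h ^^ 0) x" using i(2) periodic by simp
      then show ?thesis using \<open>0 < k\<close> unfolding A_def by blast
    qed
  qed
  moreover have "A \<subseteq> h ` A"
  proof
    fix y assume "y \<in> A"
    then obtain j where j: "j < k" "y = (h ^^ j) x" by (auto simp: A_def)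
    show "y \<in> h ` A"
    proof (cases j)
      case 0
      then have "y = h ((h ^^ (k - 1)) x)"
        using j(2) periodic \<open>0 < k\<close> by (metis Suc_diff_1 comp_apply funpow.simps(2) funpow_0)
      moreover have "(h ^^ (k - 1)) x \<in> A" using \<open>0 < k\<close> by (auto simp: A_def)
      ultimately show ?thesis by blast
    next
      case (Suc i)
      then have "y = h ((h ^^ i) x)" "(h ^^ i) x \<in> A" using j by (auto simp: A_def)
      then show ?thesis by blast
    qed
  qed
  moreover have "closed A" by (simp add: A_def finite_imp_closed)
  ultimately have "A = {} \<or> A = UNIV" using assms(2) by (simp add: minimal_map_def)
  moreover have "x \<in> A" using \<open>0 < k\<close> by (auto simp: A_def intro!: image_eqI[of _ _ 0])
  moreover have "finite A" by (simp add: A_def)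
  ultimately show False using assms(1) by auto
qed

lemma neighbourhood_disjoint_from_preimages:
  fixes h :: "'a::t2_space \<Rightarrow> 'a"
  assumes "continuous_on UNIV h" "\<And>k. 0 < k \<Longrightarrow> k < N \<Longrightarrow> (h ^^ k) x \<noteq> x" "open U" "x \<in> U"
  obtains V where "open V" "x \<in> V" "V \<subseteq> U" "\<And>k. 0 < k \<Longrightarrow> k < N \<Longrightarrow> V \<inter> (h ^^ k) -` V = {}"
proof -
  have "\<exists>Z. open Z \<and> x \<in> Z \<and> Z \<inter> (h ^^ k) -` Z = {}" if "k \<in> {0<..<N}" for k
  proof -
    have "0 < k" "k < N" using that by auto
    then have "x \<noteq> (h ^^ k) x" using assms(2) by (metis not_sym)
    then obtain P Q where PQ: "open P" "open Q" "x \<in> P" "(h ^^ k) x \<in> Q" "P \<inter> Q = {}"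
      by (metis hausdorff)
    have "open ((h ^^ k) -` Q)"
      using PQ(2) continuous_on_funpow[OF assms(1)] by (simp add: open_vimage)
    then show ?thesis using PQ by (intro exI[of _ "P \<inter> (h ^^ k) -` Q"]) auto
  qed
  then have "\<forall>k\<in>{0<..<N}. \<exists>Z. open Z \<and> x \<in> Z \<and> Z \<inter> (h ^^ k) -` Z = {}" ..
  then obtain Z where Z: "\<forall>k\<in>{0<..<N}. open (Z k) \<and> x \<in> Z k \<and> Z k \<inter> (h ^^ k) -` Z k = {}"
    by (rule bchoice[THEN exE])
  define V where "V = U \<inter> (\<Inter>k\<in>{0<..<N}. Z k)"
  have "open V" unfolding V_def using assms(3) Z by (intro open_Int open_INT) auto
  moreover have "x \<in> V" using assms(4) Z by (simp add: V_def)
  moreover have "V \<inter> (h ^^ k) -` V = {}" if "0 < k" "k < N" for k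
  proof -
    have "V \<subseteq> Z k" using that by (auto simp: V_def)
    moreover have "Z k \<inter> (h ^^ k) -` Z k = {}" using Z that by simp
    ultimately show ?thesis by blast
  qed
  ultimately show thesis using that[of V] by (auto simp: V_def)
qed

text \<open>The sets (h^^i) -` V for i < N are pairwise disjoint and, by invariance, all of measure \<mu> V.\<close>
lemma measure_le_of_disjoint_preimages:
  fixes h :: "'a::topological_space \<Rightarrow> 'a"
  assumes \<mu>: "\<mu> \<in> inv_prob_measures h" and "continuous_on UNIV h" "open V" "0 < N"
    and disjoint: "\<And>k. 0 < k \<Longrightarrow> k < N \<Longrightarrow> V \<inter> (h ^^ k) -` V = {}"
  shows "measure \<mu> V \<le> 1 / real N"
proof -
  define S where "S i = (h ^^ i) -` V" for i
  have borel: "S i \<in> sets borel" for i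
    using assms(3) continuous_on_funpow[OF assms(2)] by (auto simp: S_def open_vimage)
  have "emeasure \<mu> (S i) = emeasure \<mu> V" for i
  proof (induction i)
    case (Suc i)
    have "S (Suc i) = h -` S i" by (simp only: S_def funpow_Suc_right vimage_comp)
    then show ?case using Suc inv_prob_measuresD(3)[OF \<mu> borel] by simp
  qed (simp add: S_def)
  then have measure_S: "measure \<mu> (S i) = measure \<mu> V" for i by (simp add: measure_def)
  have "disjoint_family_on S {..<N}"
  unfolding disjoint_family_on_def
  proof (intro ballI impI)
    fix i j assume "i \<in> {..<N}" "j \<in> {..<N}" "i \<noteq> j"
    moreover have "S i \<inter> S j = {}" if "i < j" "j < N" for i j
    proof -
      have "(h ^^ j) y = (h ^^ (j - i)) ((h ^^ i) y)" for y
        using that by (metis funpow_add le_add_diff_inverse2 less_imp_le o_apply)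
      moreover have "0 < j - i" "j - i < N" using that by auto
      ultimately show ?thesis using disjoint[of "j - i"] by (auto simp: S_def)
    qed
    ultimately show "S i \<inter> S j = {}"
      by (cases "i < j") (auto simp: Int_commute[of "S i"] dest: linorder_neqE_nat)
  qed
  then have "measure \<mu> (\<Union>i<N. S i) = (\<Sum>i<N. measure \<mu> (S i))"
    using borel inv_prob_measuresD(2)[OF \<mu>]
      finite_measure.emeasure_finite[OF prob_space.finite_measure[OF inv_prob_measuresD(1)[OF \<mu>]]]
    by (intro measure_finite_Union) auto
  also have "\<dots> = real N * measure \<mu> V" using measure_S by simp
  finally have "real N * measure \<mu> V \<le> 1"
    using prob_space.prob_le_1[OF inv_prob_measuresD(1)[OF \<mu>]] by metis
  then show ?thesis using \<open>0 < N\<close> by (simp add: field_simps)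
qed

lemma open_subset_uniformly_small:
  fixes h :: "'a::metric_space \<Rightarrow> 'a"
  assumes "infinite (UNIV :: 'a set)" "continuous_on UNIV h" "minimal_map h" "\<epsilon> > 0"
    and "open U" "U \<noteq> {}"
  obtains E where "open E" "E \<noteq> {}" "E \<subseteq> U" "\<And>\<mu>. \<mu> \<in> inv_prob_measures h \<Longrightarrow> measure \<mu> E < \<epsilon>"
proof -
  obtain N :: nat where N: "1 / \<epsilon> < real N" using reals_Archimedean2 by blast
  then have "0 < N" using \<open>\<epsilon> > 0\<close> by (auto intro: ccontr)
  obtain x where "x \<in> U" using assms(6) by blast
  then obtain V where V: "open V" "x \<in> V" "V \<subseteq> U" "\<And>k. 0 < k \<Longrightarrow> k < N \<Longrightarrow> V \<inter> (h ^^ k) -` V = {}"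
    using neighbourhood_disjoint_from_preimages[OF assms(2) _ assms(5)]
      minimal_map_no_periodic_points[OF assms(1,3)] by metis
  have "measure \<mu> V < \<epsilon>" if "\<mu> \<in> inv_prob_measures h" for \<mu>
  proof -
    have "measure \<mu> V \<le> 1 / real N" by (rule measure_le_of_disjoint_preimages[OF that assms(2) V(1) \<open>0 < N\<close> V(4)])
    also have "\<dots> < \<epsilon>" using N \<open>\<epsilon> > 0\<close> \<open>0 < N\<close> by (simp add: field_simps)
    finally show ?thesis .
  qed
  with V show thesis by (intro that) auto
qed

theorem corollary2p5:
  fixes h :: "'a::metric_space \<Rightarrow> 'a" and \<epsilon> :: real
  assumes "compact (UNIV :: 'a set)"
    and "infinite (UNIV :: 'a set)"
    and "\<exists>g. homeomorphism UNIV UNIV h g"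
    and "minimal_map h"
    and "\<epsilon> > 0"
  shows "(\<forall>U. open U \<and> U \<noteq> {} \<longrightarrow>
            (\<exists>E. open E \<and> E \<noteq> {} \<and> E \<subseteq> U \<and>
                 (\<forall>\<mu>\<in>inv_prob_measures h. measure \<mu> E < \<epsilon>)))
       \<and> (\<forall>U. open U \<and> U \<noteq> {} \<and> universally_null h (frontier U) \<longrightarrow>
            (\<exists>K. closed K \<and> K \<subseteq> U \<and> interior K \<noteq> {} \<and>
                 (\<forall>\<mu>\<in>inv_prob_measures h. measure \<mu> (U - K) < \<epsilon>)))
       \<and> (\<forall>U. open U \<and> U \<noteq> {} \<and> universally_null h (frontier U) \<longrightarrow>
            (\<exists>E. open E \<and> E \<subseteq> U \<and> closure E \<subseteq> U \<and>
                 (\<forall>\<mu>\<in>inv_prob_measures h. measure \<mu> (U - closure E) < \<epsilon>)))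
       \<and> (\<forall>K. closed K \<and> universally_null h (frontier K) \<longrightarrow>
            (\<exists>E. open E \<and> K \<subseteq> E \<and>
                 (\<forall>\<mu>\<in>inv_prob_measures h. measure \<mu> (E - K) < \<epsilon>)))"
proof -
  obtain g where hom: "homeomorphism UNIV UNIV h g" using assms(3) by blast
  then have "continuous_on UNIV h" by (simp add: homeomorphism_def)
  show ?thesis
  proof (intro conjI allI impI; elim conjE)
    fix U :: "'a set"
    assume "open U" "U \<noteq> {}"
    then show "\<exists>E. open E \<and> E \<noteq> {} \<and> E \<subseteq> U \<and> (\<forall>\<mu>\<in>inv_prob_measures h. measure \<mu> E < \<epsilon>)"
      by (rule open_subset_uniformly_small[OF assms(2) \<open>continuous_on UNIV h\<close> assms(4,5)]) blast
  next
    fix U :: "'a set"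
    assume "open U" "U \<noteq> {}" "universally_null h (frontier U)"
    then show "\<exists>K. closed K \<and> K \<subseteq> U \<and> interior K \<noteq> {} \<and>
        (\<forall>\<mu>\<in>inv_prob_measures h. measure \<mu> (U - K) < \<epsilon>)"
      by (rule closed_subset_with_interior_uniformly_large[OF assms(1) hom _ _ _ assms(5)]) blast
  next
    fix U :: "'a set"
    assume "open U" "universally_null h (frontier U)"
    then show "\<exists>E. open E \<and> E \<subseteq> U \<and> closure E \<subseteq> U \<and>
        (\<forall>\<mu>\<in>inv_prob_measures h. measure \<mu> (U - closure E) < \<epsilon>)"
      by (rule open_subset_closure_uniformly_large[OF assms(1) hom _ _ assms(5)])
        (use closure_subset in blast)
  next
    fix K :: "'a set"
    assume "closed K" "universally_null h (frontier K)"
    then show "\<exists>E. open E \<and> K \<subseteq> E \<and> (\<forall>\<mu>\<in>inv_prob_measures h. measure \<mu> (E - K) < \<epsilon>)"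
      by (rule open_superset_uniformly_small[OF assms(1) hom _ _ assms(5)]) blast
  qed
qed

end
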